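(* For all integers $a\ge1$, $b\ge2$ and every positive integer $t$, $$i((1,1,a,b),t)+i((1,1,b-1,a+1),t)=(t+2)\,F(a+1,b,0,t).$$
   Context: For $S,T\subseteq[n]$, write $T\le S$ if $|T|=|S|$ and the $i$-th smallest element of $T$ is at most the $i$-th smallest element of $S$ for each $i$. The Schubert matroid $\mathrm{SM}_n(S)$ is the matroid on $[n]$ with bases $\{T\subseteq[n]:T\le S\}$; $i(M,t)$ is the number of lattice points in the $t$-th dilate of the matroid polytope $\mathrm{conv}\{\sum_{b\in B}e_b: B\text{ a basis of }M\}$. For a sequence $r=(r_1,\dots,r_{2m})$ of integers with $r_1\ge0$, $r_i>0$ for $i\ge2$, let $n=\sum r_i$ and let $S\subseteq[n]$ have indicator vector $(0^{r_1},1^{r_2},\dots,0^{r_{2m-1}},1^{r_{2m}})$ ($x^p$ = $p$ consecutive copies of $x$); $i(r,t):=i(\mathrm{SM}_n(S),t)$. For integers $a,b\ge0$ with $a+b\ge1$, $c\in\mathbb Z$, $t\ge0$: $F(a,b,c,t)=\sum_{j=0}^{a+b}(-1)^j\binom{a+b}{j}\binom{(t+1)(b-j)+a+c-1}{a+b-1}$, with $\binom00=1$ and $\binom NK=0$ if $K<0$ or $N<K$. *)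

theory Defs
  imports Complex_Main
begin

definition gale_le :: "nat set \<Rightarrow> nat set \<Rightarrow> bool" where
  "gale_le T S \<longleftrightarrow> card T = card S \<and>
     (\<forall>i < card S. sorted_list_of_set T ! i \<le> sorted_list_of_set S ! i)"

definition schubert_bases :: "nat \<Rightarrow> nat set \<Rightarrow> nat set set" where
  "schubert_bases n S = {T. T \<subseteq> {1..n} \<and> gale_le T S}"

(* number of lattice points in the t-th dilate of the matroid polytope
   conv{ e_B : B basis }, points of R^n represented as functions nat \<Rightarrow> _;
   the convex hull of the finite set of indicator vectors is written out as the
   set of convex combinations *)
definition polytope_lattice_count :: "nat set set \<Rightarrow> nat \<Rightarrow> nat" where
  "polytope_lattice_count Bs t = card {x :: nat \<Rightarrow> int. \<exists>w :: nat set \<Rightarrow> real.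
      (\<forall>B\<in>Bs. 0 \<le> w B) \<and> (\<Sum>B\<in>Bs. w B) = 1 \<and>
      (\<forall>i. real_of_int (x i) = real t * (\<Sum>B\<in>Bs. w B * (if i \<in> B then 1 else 0)))}"

(* indicator word (0^{r1},1^{r2},...,0^{r_{2m-1}},1^{r_{2m}}), True = 1 *)
fun ind_word :: "nat list \<Rightarrow> bool list" where
  "ind_word [] = []"
| "ind_word [x] = replicate x False"
| "ind_word (x # y # rs) = replicate x False @ replicate y True @ ind_word rs"

definition seq_set :: "nat list \<Rightarrow> nat set" where
  "seq_set r = {i \<in> {1..length (ind_word r)}. ind_word r ! (i - 1)}"

definition iseq :: "nat list \<Rightarrow> nat \<Rightarrow> nat" where
  "iseq r t = polytope_lattice_count (schubert_bases (sum_list r) (seq_set r)) t"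

definition binom :: "int \<Rightarrow> int \<Rightarrow> int" where
  "binom N K = (if K < 0 \<or> N < K then 0 else int (nat N choose nat K))"

definition F :: "nat \<Rightarrow> nat \<Rightarrow> int \<Rightarrow> nat \<Rightarrow> int" where
  "F a b c t = (\<Sum>j=0..a+b. (-1)^j * int ((a+b) choose j) *
      binom ((int t + 1) * (int b - int j) + int a + c - 1) (int a + int b - 1))"

end

theory Submission
  imports Defs
begin

text \<open>For the word \<open>0 1 0\<^sup>c 1\<^sup>d\<close> the bases of the Schubert matroid are the \<open>(d+1)\<close>-subsets of
  \<open>[c+d+2]\<close> meeting \<open>{1,2}\<close>, and the lattice points of the \<open>t\<close>-th dilate of its polytope are
  the integer vectors \<open>x \<in> [0,t]\<^bsup>c+d+2\<^esup>\<close> with \<open>\<Sum>x = t(d+1)\<close> and \<open>x\<^sub>1 + x\<^sub>2 \<ge> t\<close>; every such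
  point is a sum of \<open>t\<close> bases, obtained by rounding its partial sums. Fixing \<open>(x\<^sub>1, x\<^sub>2) = (p, q)\<close>,
  the other coordinates form a composition of \<open>td - (p+q-t)\<close> with parts at most \<open>t\<close>. For the
  second sequence the reflection \<open>x\<^sub>i \<mapsto> t - x\<^sub>i\<close> turns this into a composition of \<open>tb - (2t-p-q)\<close>,
  so that in the sum of both counts over \<open>p, q\<close> every value \<open>s \<in> [0,t]\<close> of the deficit occurs
  \<open>t + 2\<close> times. What remains is the number of compositions of \<open>tb\<close> into \<open>a+b+1\<close> parts at most
  \<open>t\<close>, which inclusion-exclusion evaluates to \<open>F(a+1, b, 0, t)\<close>.\<close>

subsection \<open>Compositions with bounded parts\<close>

definition bounded_lists :: "int \<Rightarrow> nat \<Rightarrow> int list set" where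
  "bounded_lists T m = {xs. length xs = m \<and> (\<forall>v\<in>set xs. 0 \<le> v \<and> v \<le> T)}"

lemma finite_bounded_lists: "finite (bounded_lists T m)"
proof -
  have "bounded_lists T m = {xs. set xs \<subseteq> {0..T} \<and> length xs = m}"
    unfolding bounded_lists_def by auto
  then show ?thesis by (simp add: finite_lists_length_eq)
qed

lemma card_bounded_lists_Suc:
  "card {xs \<in> bounded_lists T (Suc m). P xs}
     = (\<Sum>v\<in>{0..T}. card {ys \<in> bounded_lists T m. P (v # ys)})"
proof -
  have split: "{xs \<in> bounded_lists T (Suc m). P xs}
      = (\<Union>v\<in>{0..T}. Cons v ` {ys \<in> bounded_lists T m. P (v # ys)})"
    by (auto simp: bounded_lists_def length_Suc_conv)
  show ?thesis
    unfolding split using finite_bounded_lists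
    by (subst card_UN_disjoint) (auto intro!: sum.cong simp: card_image)
qed

lemma card_bounded_lists_0:
  "card {xs \<in> bounded_lists T 0. P xs} = (if P [] then 1 else 0)"
proof -
  have "{xs \<in> bounded_lists T 0. P xs} = (if P [] then {[]} else {})"
    by (auto simp: bounded_lists_def)
  then show ?thesis by simp
qed

definition bounded_compositions :: "nat \<Rightarrow> nat \<Rightarrow> int \<Rightarrow> nat" where
  "bounded_compositions t m s = card {xs \<in> bounded_lists (int t) m. sum_list xs = s}"

lemma sum_atLeastAtMost_int_nat: "(\<Sum>v\<in>{0..int t}. f v) = (\<Sum>v\<in>{0..t}. f (int v))"
  using sum.atLeast_int_atMost_int_shift[of f 0 t] by (simp add: comp_def)

lemma bounded_compositions_Suc:
  "bounded_compositions t (Suc m) s = (\<Sum>v\<in>{0..t}. bounded_compositions t m (s - int v))"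
proof -
  have "bounded_compositions t (Suc m) s = (\<Sum>v\<in>{0..int t}. bounded_compositions t m (s - v))"
    unfolding bounded_compositions_def card_bounded_lists_Suc
    by (intro sum.cong refl arg_cong[where f = card]) auto
  then show ?thesis by (simp add: sum_atLeastAtMost_int_nat)
qed

lemma bounded_compositions_complement:
  "bounded_compositions t m s = bounded_compositions t m (int t * int m - s)"
proof -
  let ?f = "map (\<lambda>v. int t - v)"
  have sum_f: "sum_list (?f xs) = int (length xs) * int t - sum_list xs" for xs
    by (induction xs) (auto simp: algebra_simps)
  have "bij_betw ?f {xs \<in> bounded_lists (int t) m. sum_list xs = s}
                    {xs \<in> bounded_lists (int t) m. sum_list xs = int t * int m - s}"
    by (rule bij_betw_byWitness[where f' = ?f]) (auto simp: bounded_lists_def sum_f comp_def)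
  then show ?thesis
    unfolding bounded_compositions_def by (rule bij_betw_same_card)
qed

lemma binom_pascal:
  assumes "0 \<le> K"
  shows "binom (M + 1) (K + 1) = binom M (K + 1) + binom M K"
proof -
  consider "M < K" | "M = K" | "K < M" by linarith
  then show ?thesis
  proof cases
    case 3
    then have "nat (M + 1) = Suc (nat M)" "nat (K + 1) = Suc (nat K)" using assms by auto
    with 3 assms show ?thesis by (simp add: binom_def)
  qed (use assms in \<open>simp_all add: binom_def\<close>)
qed

lemma sum_binom_hockey_stick:
  assumes "0 \<le> K"
  shows "(\<Sum>v\<in>{0..N}. binom (M - int v) K) = binom (M + 1) (K + 1) - binom (M - int N) (K + 1)"
proof (induction N)
  case 0
  then show ?case using binom_pascal[OF assms, of M] by simp
next
  case (Suc N)
  then show ?case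
    using binom_pascal[OF assms, of "M - int N - 1"] by (simp add: algebra_simps)
qed

text \<open>Inclusion-exclusion over the parts exceeding \<open>T\<close>: the coefficient of \<open>x\<^sup>s\<close>
  in \<open>(1 - x\<^bsup>T+1\<^esup>)\<^sup>m / (1 - x)\<^sup>m\<close>.\<close>

definition bounded_composition_formula :: "int \<Rightarrow> nat \<Rightarrow> int \<Rightarrow> int" where
  "bounded_composition_formula T m s =
     (\<Sum>j\<le>m. (-1)^j * int (m choose j) * binom (s - int j * (T + 1) + int m - 1) (int m - 1))"

lemma bounded_composition_formula_1:
  "bounded_composition_formula (int t) 1 s = (if 0 \<le> s \<and> s \<le> int t then 1 else 0)"
  unfolding bounded_composition_formula_def by (simp add: binom_def)

lemma bounded_composition_formula_Suc:
  assumes "1 \<le> m"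
  shows "(\<Sum>v\<in>{0..t}. bounded_composition_formula (int t) m (s - int v))
           = bounded_composition_formula (int t) (Suc m) s"
proof -
  define H where "H j = binom (s - int j * (int t + 1) + int m) (int m)" for j
  have telescope: "(\<Sum>v\<in>{0..t}. binom (s - int v - int j * (int t + 1) + int m - 1) (int m - 1))
      = H j - H (Suc j)" for j
    using sum_binom_hockey_stick[where K = "int m - 1" and N = t and M = "s - int j * (int t + 1) + int m - 1"] assms
    unfolding H_def by (simp add: algebra_simps)
  have "(\<Sum>v\<in>{0..t}. bounded_composition_formula (int t) m (s - int v))
      = (\<Sum>j\<le>m. (-1)^j * int (m choose j) * (H j - H (Suc j)))"
    unfolding bounded_composition_formula_def
    by (subst sum.swap) (simp add: sum_distrib_left[symmetric] telescope)
  also have "\<dots> = (\<Sum>j\<le>Suc m. (-1)^j * int (m choose j) * H j)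
                 - (\<Sum>j\<le>m. (-1)^j * int (m choose j) * H (Suc j))"
    by (simp add: algebra_simps sum_subtractf)
  also have "\<dots> = H 0 + (\<Sum>j\<le>m. (-1)^(Suc j) * int (Suc m choose Suc j) * H (Suc j))"
    unfolding sum.atMost_Suc_shift by (simp add: algebra_simps sum_subtractf sum.distrib sum_negf)
  also have "\<dots> = bounded_composition_formula (int t) (Suc m) s"
    unfolding bounded_composition_formula_def H_def sum.atMost_Suc_shift
    by (simp add: algebra_simps)
  finally show ?thesis .
qed

lemma bounded_compositions_eq_formula:
  "1 \<le> m \<Longrightarrow> int (bounded_compositions t m s) = bounded_composition_formula (int t) m s"
proof (induction m arbitrary: s rule: nat_induct_at_least)
  case base
  have "bounded_compositions t 1 s = (\<Sum>v\<in>{0..t}. if s = int v then 1 else 0)"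
    using bounded_compositions_Suc[of t 0 s]
    by (simp add: bounded_compositions_def card_bounded_lists_0)
  also have "\<dots> = card {v \<in> {0..t}. s = int v}"
    by (simp add: sum.If_cases Int_def)
  also have "{v \<in> {0..t}. s = int v} = (if 0 \<le> s \<and> s \<le> int t then {nat s} else {})"
    by auto
  also have "card \<dots> = (if 0 \<le> s \<and> s \<le> int t then 1 else 0)"
    by simp
  finally show ?case
    using bounded_composition_formula_1[of t s] by simp
next
  case (Suc m)
  then show ?case
    by (simp add: bounded_compositions_Suc bounded_composition_formula_Suc)
qed

lemma F_eq_bounded_composition_formula:
  "F (a + 1) b 0 t = bounded_composition_formula (int t) (a + b + 1) (int t * int b)"
  unfolding F_def bounded_composition_formula_def
  by (intro sum.cong) (auto simp: atLeast0AtMost algebra_simps)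

lemma sum_threshold_ascending:
  fixes f :: "nat \<Rightarrow> 'a::comm_monoid_add"
  assumes "p \<le> t"
  shows "(\<Sum>q\<in>{0..t}. if t \<le> p + q then f (p + q - t) else 0) = (\<Sum>s\<in>{0..p}. f s)"
proof -
  have "(\<Sum>q\<in>{0..t}. if t \<le> p + q then f (p + q - t) else 0) = (\<Sum>q\<in>{t - p..t}. f (p + q - t))"
    by (rule sum.mono_neutral_cong_right) (use assms in auto)
  also have "\<dots> = (\<Sum>s\<in>{0..p}. f s)"
    by (rule sum.reindex_bij_witness[where i = "\<lambda>s. s + (t - p)" and j = "\<lambda>q. q - (t - p)"])
       (use assms in \<open>auto simp: add.commute\<close>)
  finally show ?thesis .
qed

lemma sum_threshold_descending:
  fixes f :: "nat \<Rightarrow> 'a::comm_monoid_add"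
  assumes "p \<le> t"
  shows "(\<Sum>q\<in>{0..t}. if t \<le> p + q then f (2 * t - p - q) else 0) = (\<Sum>s\<in>{t - p..t}. f s)"
proof -
  have "(\<Sum>q\<in>{0..t}. if t \<le> p + q then f (2 * t - p - q) else 0)
      = (\<Sum>q\<in>{t - p..t}. f (2 * t - p - q))"
    by (rule sum.mono_neutral_cong_right) (use assms in auto)
  also have "\<dots> = (\<Sum>s\<in>{t - p..t}. f s)"
    by (rule sum.reindex_bij_witness[where i = "\<lambda>s. 2 * t - p - s" and j = "\<lambda>q. 2 * t - p - q"])
       (use assms in auto)
  finally show ?thesis .
qed

lemma sum_atLeastAtMost_overlap:
  fixes f :: "nat \<Rightarrow> 'a::comm_monoid_add"
  assumes "p \<le> t"
  shows "(\<Sum>s\<in>{0..p}. f s) + (\<Sum>s\<in>{p..t}. f s) = (\<Sum>s\<in>{0..t}. f s) + f p"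
proof -
  have "(\<Sum>s\<in>{0..t}. f s) = (\<Sum>s\<in>{0..p}. f s) + (\<Sum>s\<in>{Suc p..t}. f s)"
    using sum.ub_add_nat[of 0 p f "t - p"] assms by simp
  moreover have "(\<Sum>s\<in>{p..t}. f s) = f p + (\<Sum>s\<in>{Suc p..t}. f s)"
    using assms by (simp add: sum.atLeast_Suc_atMost)
  ultimately show ?thesis by (simp add: ac_simps)
qed

lemma threshold_double_sum:
  fixes f :: "nat \<Rightarrow> int"
  shows "(\<Sum>p\<in>{0..t}. \<Sum>q\<in>{0..t}. if t \<le> p + q then f (p + q - t) else 0)
       + (\<Sum>p\<in>{0..t}. \<Sum>q\<in>{0..t}. if t \<le> p + q then f (2 * t - p - q) else 0)
       = (int t + 2) * (\<Sum>s\<in>{0..t}. f s)"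
proof -
  have "(\<Sum>p\<in>{0..t}. \<Sum>q\<in>{0..t}. if t \<le> p + q then f (p + q - t) else 0)
       + (\<Sum>p\<in>{0..t}. \<Sum>q\<in>{0..t}. if t \<le> p + q then f (2 * t - p - q) else 0)
      = (\<Sum>p\<in>{0..t}. \<Sum>s\<in>{0..p}. f s) + (\<Sum>p\<in>{0..t}. \<Sum>s\<in>{t - p..t}. f s)"
    by (simp add: sum_threshold_ascending sum_threshold_descending)
  also have "(\<Sum>p\<in>{0..t}. \<Sum>s\<in>{t - p..t}. f s) = (\<Sum>p\<in>{0..t}. \<Sum>s\<in>{p..t}. f s)"
    by (subst sum.atLeastAtMost_rev) simp
  also have "(\<Sum>p\<in>{0..t}. \<Sum>s\<in>{0..p}. f s) + \<dots>
      = (\<Sum>p\<in>{0..t}. (\<Sum>s\<in>{0..p}. f s) + (\<Sum>s\<in>{p..t}. f s))"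
    by (simp add: sum.distrib)
  also have "\<dots> = (\<Sum>p\<in>{0..t}. (\<Sum>s\<in>{0..t}. f s) + f p)"
    by (simp add: sum_atLeastAtMost_overlap)
  also have "\<dots> = (int t + 2) * (\<Sum>s\<in>{0..t}. f s)"
    by (simp add: sum.distrib algebra_simps)
  finally show ?thesis .
qed

subsection \<open>The Schubert matroid of \<open>(1, 1, c, d)\<close>\<close>

definition meeting_bases :: "nat \<Rightarrow> nat \<Rightarrow> nat \<Rightarrow> nat set set" where
  "meeting_bases n a k = {B. B \<subseteq> {1..n} \<and> card B = k \<and> B \<inter> {1..a} \<noteq> {}}"

lemma finite_meeting_bases: "finite (meeting_bases n a k)"
  by (rule finite_subset[of _ "Pow {1..n}"]) (auto simp: meeting_bases_def)

lemma seq_set_1_1: "seq_set [1, 1, c, d] = insert 2 {c + 3..c + d + 2}"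
proof -
  define w where "w = ind_word [1, 1, c, d]"
  have word: "w ! (i - 1) \<longleftrightarrow> i = 2 \<or> c + 3 \<le> i" if "1 \<le> i" "i \<le> c + d + 2" for i
  proof (cases "i \<le> 2")
    case True
    then have "i = 1 \<or> i = 2" using that by linarith
    then show ?thesis unfolding w_def by auto
  next
    case False
    define k where "k = i - 3"
    have "i = Suc (Suc (Suc k))" using False unfolding k_def by simp
    then show ?thesis using that unfolding w_def by (auto simp: nth_append)
  qed
  have "length w = c + d + 2" unfolding w_def by simp
  then show ?thesis
    unfolding seq_set_def w_def[symmetric] using word word[of 2] by auto
qed

lemma card_seq_set_1_1: "card (seq_set [1, 1, c, d]) = d + 1"
  unfolding seq_set_1_1 by simp

lemma sorted_list_of_set_seq_set_1_1:
  "sorted_list_of_set (seq_set [1, 1, c, d]) = 2 # [c + 3..<c + d + 3]"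
proof -
  have "sorted_list_of_set (insert (2::nat) {c + 3..<c + d + 3})
      = insort 2 (sorted_list_of_set {c + 3..<c + d + 3})"
    by (rule sorted_list_of_set_insert) auto
  also have "\<dots> = 2 # [c + 3..<c + d + 3]"
    by (simp add: insort_is_Cons)
  moreover have "seq_set [1, 1, c, d] = insert 2 {c + 3..<c + d + 3}"
    unfolding seq_set_1_1 by auto
  ultimately show ?thesis by simp
qed

lemma sorted_wrt_less_nth_gap:
  fixes xs :: "nat list"
  assumes "sorted_wrt (<) xs" "i \<le> j" "j < length xs"
  shows "xs ! i + (j - i) \<le> xs ! j"
  using assms(2,3)
proof (induction j)
  case (Suc j)
  show ?case
  proof (cases "i = Suc j")
    case False
    with Suc have "xs ! i + (j - i) \<le> xs ! j" by simp
    moreover have "xs ! j < xs ! Suc j"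
      using sorted_wrt_nth_less[OF assms(1), of j "Suc j"] Suc.prems by simp
    ultimately show ?thesis using False Suc.prems by simp
  qed simp
qed simp

lemma gale_le_seq_set_1_1:
  assumes "T \<subseteq> {1..c + d + 2}"
  shows "gale_le T (seq_set [1, 1, c, d]) \<longleftrightarrow> card T = d + 1 \<and> T \<inter> {1..2} \<noteq> {}"
proof (cases "card T = d + 1")
  case True
  define xs where "xs = sorted_list_of_set T"
  have fin: "finite T" using True by (intro card_ge_0_finite) simp
  have ne: "T \<noteq> {}" using True fin by auto
  have sorted: "sorted_wrt (<) xs" and len: "length xs = d + 1" and set_xs: "set xs = T"
    unfolding xs_def using True fin by auto
  have head: "xs ! 0 \<le> 2 \<longleftrightarrow> T \<inter> {1..2} \<noteq> {}"
  proof -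
    have "xs ! 0 = Min T"
      unfolding xs_def by (simp add: sorted_list_of_set_nonempty[OF fin ne])
    moreover have "Min T \<in> T" "\<forall>i\<in>T. Min T \<le> i" using fin ne by simp_all
    ultimately show ?thesis using assms by fastforce
  qed
  have tail: "xs ! Suc i \<le> [c + 3..<c + d + 3] ! i" if "i < d" for i
  proof -
    have "xs ! Suc i + (d - Suc i) \<le> xs ! d"
      using sorted_wrt_less_nth_gap[OF sorted, of "Suc i" d] that len by simp
    moreover have "xs ! d \<le> c + d + 2"
      using nth_mem[of d xs] len set_xs assms by auto
    ultimately show ?thesis using that by simp
  qed
  show ?thesis
    unfolding gale_le_def sorted_list_of_set_seq_set_1_1 card_seq_set_1_1
    using True head tail by (simp add: All_less_Suc2 xs_def)
next
  case False
  then show ?thesis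
    unfolding gale_le_def card_seq_set_1_1 by simp
qed

lemma schubert_bases_1_1:
  "schubert_bases (sum_list [1, 1, c, d]) (seq_set [1, 1, c, d]) = meeting_bases (c + d + 2) 2 (d + 1)"
  unfolding schubert_bases_def meeting_bases_def
  using gale_le_seq_set_1_1 by (auto simp: ac_simps)

subsection \<open>Lattice points of the matroid polytope\<close>

definition dilate_points :: "nat set set \<Rightarrow> nat \<Rightarrow> (nat \<Rightarrow> int) set" where
  "dilate_points Bs t = {x. \<exists>w :: nat set \<Rightarrow> real.
      (\<forall>B\<in>Bs. 0 \<le> w B) \<and> (\<Sum>B\<in>Bs. w B) = 1 \<and>
      (\<forall>i. real_of_int (x i) = real t * (\<Sum>B\<in>Bs. w B * (if i \<in> B then 1 else 0)))}"

lemma polytope_lattice_count_eq_card: "polytope_lattice_count Bs t = card (dilate_points Bs t)"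
  unfolding polytope_lattice_count_def dilate_points_def ..

definition meeting_points :: "nat \<Rightarrow> nat \<Rightarrow> nat \<Rightarrow> nat \<Rightarrow> (nat \<Rightarrow> int) set" where
  "meeting_points n a k t = {x. (\<forall>i. i \<notin> {1..n} \<longrightarrow> x i = 0) \<and> (\<forall>i. 0 \<le> x i \<and> x i \<le> int t)
      \<and> (\<Sum>i\<in>{1..n}. x i) = int t * int k \<and> int t \<le> (\<Sum>i\<in>{1..a}. x i)}"

lemma sum_dilate_point:
  assumes "finite I"
    and x: "\<forall>i. real_of_int (x i) = real t * (\<Sum>B\<in>Bs. w B * (if i \<in> B then 1 else 0))"
  shows "real_of_int (\<Sum>i\<in>I. x i) = real t * (\<Sum>B\<in>Bs. w B * real (card (B \<inter> I)))"
proof -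
  have indicator_sum: "(\<Sum>i\<in>I. if i \<in> B then 1 else 0) = real (card (B \<inter> I))" for B
    using assms(1) by (simp add: sum.If_cases Int_commute Int_def)
  have "real_of_int (\<Sum>i\<in>I. x i) = real t * (\<Sum>i\<in>I. \<Sum>B\<in>Bs. w B * (if i \<in> B then 1 else 0))"
    using x by (simp add: sum_distrib_left)
  also have "\<dots> = real t * (\<Sum>B\<in>Bs. w B * (\<Sum>i\<in>I. if i \<in> B then 1 else 0))"
    by (subst sum.swap) (simp add: sum_distrib_left)
  finally show ?thesis by (simp add: indicator_sum)
qed

lemma convex_combination_le:
  fixes h :: real
  assumes "\<forall>B\<in>Bs. 0 \<le> w B" "(\<Sum>B\<in>Bs. w B) = 1" "\<forall>B\<in>Bs. c B \<le> h"
  shows "(\<Sum>B\<in>Bs. w B * c B) \<le> h"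
proof -
  have "(\<Sum>B\<in>Bs. w B * c B) \<le> (\<Sum>B\<in>Bs. w B * h)"
    using assms(1,3) by (intro sum_mono mult_left_mono) auto
  then show ?thesis using assms(2) by (simp add: sum_distrib_right[symmetric])
qed

lemma convex_combination_ge:
  fixes h :: real
  assumes "\<forall>B\<in>Bs. 0 \<le> w B" "(\<Sum>B\<in>Bs. w B) = 1" "\<forall>B\<in>Bs. h \<le> c B"
  shows "h \<le> (\<Sum>B\<in>Bs. w B * c B)"
proof -
  have "(\<Sum>B\<in>Bs. w B * h) \<le> (\<Sum>B\<in>Bs. w B * c B)"
    using assms(1,3) by (intro sum_mono mult_left_mono) auto
  then show ?thesis using assms(2) by (simp add: sum_distrib_right[symmetric])
qed

lemma dilate_points_meeting_bases_subset:
  "dilate_points (meeting_bases n a k) t \<subseteq> meeting_points n a k t"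
proof
  fix x assume "x \<in> dilate_points (meeting_bases n a k) t"
  then obtain w where w0: "\<forall>B\<in>meeting_bases n a k. 0 \<le> w B"
    and w1: "(\<Sum>B\<in>meeting_bases n a k. w B) = 1"
    and wx: "\<forall>i. real_of_int (x i) = real t * (\<Sum>B\<in>meeting_bases n a k. w B * (if i \<in> B then 1 else 0))"
    unfolding dilate_points_def by blast
  let ?c = "\<lambda>I B. real (card (B \<inter> I))"
  have x_sum: "real_of_int (\<Sum>i\<in>I. x i) = real t * (\<Sum>B\<in>meeting_bases n a k. w B * ?c I B)"
    if "finite I" for I
    using sum_dilate_point[OF that wx] .
  have "real_of_int (x i) = 0" if "i \<notin> {1..n}" for i
  proof -
    have "\<forall>B\<in>meeting_bases n a k. ?c {i} B = 0"
      using that by (auto simp: meeting_bases_def)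
    then show ?thesis using x_sum[of "{i}"] by simp
  qed
  moreover have "0 \<le> real_of_int (x i) \<and> real_of_int (x i) \<le> real t" for i
  proof -
    have "\<forall>B. ?c {i} B \<le> 1" by (simp add: Int_insert_right)
    then have "0 \<le> (\<Sum>B\<in>meeting_bases n a k. w B * ?c {i} B)"
      "(\<Sum>B\<in>meeting_bases n a k. w B * ?c {i} B) \<le> 1"
      using convex_combination_ge[OF w0 w1, of 0 "?c {i}"]
        convex_combination_le[OF w0 w1, of "?c {i}" 1] by simp_all
    then show ?thesis
      using x_sum[of "{i}"] by (simp add: mult_left_le)
  qed
  moreover have "real_of_int (\<Sum>i\<in>{1..n}. x i) = real t * real k"
  proof -
    have "\<forall>B\<in>meeting_bases n a k. ?c {1..n} B = real k"
      by (auto simp: meeting_bases_def Int_absorb2)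
    then show ?thesis
      using x_sum[of "{1..n}"] w1 by (simp add: sum_distrib_right[symmetric])
  qed
  moreover have "real t \<le> real_of_int (\<Sum>i\<in>{1..a}. x i)"
  proof -
    have "\<forall>B\<in>meeting_bases n a k. 1 \<le> ?c {1..a} B"
      by (auto simp: meeting_bases_def card_gt_0_iff Suc_le_eq)
    then show ?thesis
      using x_sum[of "{1..a}"] convex_combination_ge[OF w0 w1, of 1 "?c {1..a}"]
      by (simp add: mult_le_cancel_left1)
  qed
  ultimately show "x \<in> meeting_points n a k t"
    unfolding meeting_points_def
    by (intro CollectI conjI allI impI)
       (metis of_int_eq_iff of_int_le_iff of_int_0 of_int_mult of_int_of_nat_eq)+
qed

text \<open>Conversely, a point \<open>x\<close> of the dilate is the sum of the indicator vectors of the \<open>t\<close>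
  sets \<open>B\<^sub>r = {i. \<lfloor>(X\<^sub>i + r)/t\<rfloor> > \<lfloor>(X\<^sub>i\<^sub>-\<^sub>1 + r)/t\<rfloor>}\<close> for \<open>r < t\<close>, where \<open>X\<close> are the
  partial sums of \<open>x\<close>; Hermite's identity \<open>\<Sum>r<t. \<lfloor>(y + r)/t\<rfloor> = y\<close> gives the multiplicities.\<close>

definition prefix_sum :: "(nat \<Rightarrow> int) \<Rightarrow> nat \<Rightarrow> int" where
  "prefix_sum x j = (\<Sum>i\<in>{1..j}. x i)"

definition rounding_step :: "(nat \<Rightarrow> int) \<Rightarrow> nat \<Rightarrow> nat \<Rightarrow> nat \<Rightarrow> int" where
  "rounding_step x t r i = (prefix_sum x i + int r) div int t - (prefix_sum x (i - 1) + int r) div int t"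

lemma prefix_sum_step: "1 \<le> i \<Longrightarrow> prefix_sum x i = prefix_sum x (i - 1) + x i"
  unfolding prefix_sum_def by (cases i) auto

lemma div_add_bounded_diff:
  fixes A d T :: int
  assumes "0 \<le> d" "d \<le> T" "0 < T"
  shows "(A + d) div T - A div T \<in> {0, 1}"
proof -
  have "A div T \<le> (A + d) div T" "(A + d) div T \<le> (A + T) div T"
    using assms by (intro zdiv_mono1; simp)+
  moreover have "(A + T) div T = A div T + 1" using assms by simp
  ultimately show ?thesis by auto
qed

lemma rounding_step_01:
  assumes "0 < t" "1 \<le> i" "0 \<le> x i" "x i \<le> int t"
  shows "rounding_step x t r i \<in> {0, 1}"
  using div_add_bounded_diff[of "x i" "int t" "prefix_sum x (i - 1) + int r"] assms
  unfolding rounding_step_def prefix_sum_step[OF assms(2)] by (simp add: ac_simps)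

lemma sum_rounding_step:
  "(\<Sum>i\<in>{1..j}. rounding_step x t r i) = (prefix_sum x j + int r) div int t - int r div int t"
  using sum_telescope''[of 0 j "\<lambda>i. (prefix_sum x i + int r) div int t"]
  unfolding rounding_step_def by (simp add: prefix_sum_def)

lemma sum_div_shifts:
  assumes "0 < t"
  shows "(\<Sum>r<t. (int y + int r) div int t) = int y"
proof (induction y)
  case 0
  have "(\<Sum>r<t. (int 0 + int r) div int t) = (\<Sum>r<t. 0)"
    by (intro sum.cong refl) simp
  then show ?case by simp
next
  case (Suc y)
  define g where "g r = (int y + int r) div int t" for r
  have "g 0 + (\<Sum>r<t. g (Suc r)) = (\<Sum>r<t. g r) + g t"
    by (simp flip: sum.lessThan_Suc_shift)
  moreover have "g t = g 0 + 1" unfolding g_def using assms by simp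
  ultimately have "(\<Sum>r<t. g (Suc r)) = (\<Sum>r<t. g r) + 1" by simp
  then show ?case using Suc unfolding g_def by (simp add: algebra_simps)
qed

lemma sum_rounding_step_shifts:
  assumes "0 < t" "1 \<le> i" "\<forall>j. 0 \<le> x j"
  shows "(\<Sum>r<t. rounding_step x t r i) = x i"
proof -
  have "(\<Sum>r<t. (prefix_sum x j + int r) div int t) = prefix_sum x j" for j
  proof -
    have "0 \<le> prefix_sum x j" unfolding prefix_sum_def using assms(3) by (simp add: sum_nonneg)
    then obtain y where "prefix_sum x j = int y" using nonneg_eq_int by blast
    then show ?thesis using sum_div_shifts[OF assms(1)] by simp
  qed
  then have "(\<Sum>r<t. rounding_step x t r i) = prefix_sum x i - prefix_sum x (i - 1)"
    unfolding rounding_step_def sum_subtractf by simp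
  then show ?thesis using prefix_sum_step[OF assms(2), of x] by simp
qed

lemma card_eq_sum_01:
  fixes f :: "'a \<Rightarrow> int"
  assumes "finite A" "\<forall>a\<in>A. f a \<in> {0, 1}"
  shows "int (card {a \<in> A. f a = 1}) = (\<Sum>a\<in>A. f a)"
proof -
  have "(\<Sum>a\<in>A. f a) = (\<Sum>a\<in>A. if f a = 1 then 1 else 0)"
    using assms(2) by (intro sum.cong) auto
  then show ?thesis using assms(1) by (simp add: sum.If_cases Int_def)
qed

lemma meeting_points_decomposition:
  assumes "1 \<le> t" "a \<le> n" "x \<in> meeting_points n a k t"
  obtains Bb where "\<forall>r<t. Bb r \<in> meeting_bases n a k"
    and "\<forall>i. x i = int (card {r \<in> {..<t}. i \<in> Bb r})"
proof
  let ?Bb = "\<lambda>r. {i \<in> {1..n}. rounding_step x t r i = 1}"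
  from assms(3) have x_out: "\<forall>i. i \<notin> {1..n} \<longrightarrow> x i = 0"
    and x_bound: "\<forall>i. 0 \<le> x i \<and> x i \<le> int t"
    and x_sum: "prefix_sum x n = int t * int k" and x_head: "int t \<le> prefix_sum x a"
    unfolding meeting_points_def prefix_sum_def by blast+
  have step_01: "rounding_step x t r i \<in> {0, 1}" if "1 \<le> i" for r i
    using rounding_step_01[of t i x r] assms(1) that x_bound by simp
  have card_Bb: "int (card (?Bb r)) = (\<Sum>i\<in>{1..n}. rounding_step x t r i)" for r
    using card_eq_sum_01[of "{1..n}" "rounding_step x t r"] step_01 by simp
  show "\<forall>r<t. ?Bb r \<in> meeting_bases n a k"
  proof (intro allI impI)
    fix r assume r: "r < t"
    have "int (card (?Bb r)) = (int t * int k + int r) div int t"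
      using card_Bb[of r] sum_rounding_step[of x t r n] x_sum r by simp
    also have "\<dots> = int k" using r by simp
    finally have "card (?Bb r) = k" by simp
    moreover have "\<exists>i\<in>{1..a}. rounding_step x t r i = 1"
    proof (rule ccontr)
      assume "\<not> ?thesis"
      then have "(\<Sum>i\<in>{1..a}. rounding_step x t r i) = 0"
        using step_01 by (intro sum.neutral) fastforce
      moreover have "(int t + int r) div int t \<le> (prefix_sum x a + int r) div int t"
        using x_head assms(1) by (intro zdiv_mono1) auto
      ultimately show False
        using sum_rounding_step[of x t r a] r by simp
    qed
    ultimately show "?Bb r \<in> meeting_bases n a k"
      using assms(2) unfolding meeting_bases_def by auto
  qed
  show "\<forall>i. x i = int (card {r \<in> {..<t}. i \<in> ?Bb r})"
  proof
    fix i
    show "x i = int (card {r \<in> {..<t}. i \<in> ?Bb r})"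
    proof (cases "i \<in> {1..n}")
      case True
      then have "int (card {r \<in> {..<t}. i \<in> ?Bb r}) = (\<Sum>r<t. rounding_step x t r i)"
        using card_eq_sum_01[of "{..<t}" "\<lambda>r. rounding_step x t r i"] step_01 by simp
      also have "\<dots> = x i"
        using sum_rounding_step_shifts[of t i x] assms(1) True x_bound by simp
      finally show ?thesis by simp
    qed (use x_out in auto)
  qed
qed

lemma sum_card_fibres:
  fixes g :: "'b \<Rightarrow> real"
  assumes "finite R" "finite Bs" "f ` R \<subseteq> Bs"
  shows "(\<Sum>B\<in>Bs. real (card {r \<in> R. f r = B}) * g B) = (\<Sum>r\<in>R. g (f r))"
  using sum.group[OF assms, of "\<lambda>r. g (f r)"] by simp

lemma dilate_points_of_decomposition:
  assumes "1 \<le> t" "finite Bs" "\<forall>r<t. Bb r \<in> Bs"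
    and x: "\<forall>i. x i = int (card {r \<in> {..<t}. i \<in> Bb r})"
  shows "x \<in> dilate_points Bs t"
proof -
  define w where "w B = real (card {r \<in> {..<t}. Bb r = B}) / real t" for B
  have fibres: "real t * (\<Sum>B\<in>Bs. w B * g B) = (\<Sum>r<t. g (Bb r))" for g
    using sum_card_fibres[of "{..<t}" Bs Bb g] assms(1-3)
    unfolding w_def by (auto simp: sum_distrib_left)
  have "(\<Sum>B\<in>Bs. w B) = 1"
    using fibres[of "\<lambda>_. 1"] assms(1) by (simp add: field_simps)
  moreover have "real_of_int (x i) = real t * (\<Sum>B\<in>Bs. w B * (if i \<in> B then 1 else 0))" for i
    using fibres[of "\<lambda>B. if i \<in> B then 1 else 0"] x
    by (simp add: sum.If_cases Int_def)
  moreover have "\<forall>B\<in>Bs. 0 \<le> w B" unfolding w_def by simp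
  ultimately show ?thesis
    unfolding dilate_points_def by blast
qed

lemma dilate_points_meeting_bases:
  assumes "1 \<le> t" "a \<le> n"
  shows "dilate_points (meeting_bases n a k) t = meeting_points n a k t"
proof
  show "meeting_points n a k t \<subseteq> dilate_points (meeting_bases n a k) t"
  proof
    fix x assume "x \<in> meeting_points n a k t"
    then obtain Bb where "\<forall>r<t. Bb r \<in> meeting_bases n a k"
      "\<forall>i. x i = int (card {r \<in> {..<t}. i \<in> Bb r})"
      using meeting_points_decomposition assms by blast
    then show "x \<in> dilate_points (meeting_bases n a k) t"
      using dilate_points_of_decomposition[OF assms(1) finite_meeting_bases] by blast
  qed
qed (rule dilate_points_meeting_bases_subset)

subsection \<open>Counting the lattice points\<close>

definition meeting_lists :: "nat \<Rightarrow> nat \<Rightarrow> nat \<Rightarrow> nat \<Rightarrow> int list set" where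
  "meeting_lists t n a k = {xs \<in> bounded_lists (int t) n.
      sum_list xs = int t * int k \<and> int t \<le> sum_list (take a xs)}"

lemma card_meeting_points_eq_lists:
  assumes "a \<le> n"
  shows "card (meeting_points n a k t) = card (meeting_lists t n a k)"
proof -
  let ?coords = "\<lambda>x :: nat \<Rightarrow> int. map x [1..<n + 1]"
  let ?vector = "\<lambda>xs :: int list. \<lambda>i. if i \<in> {1..n} then xs ! (i - 1) else 0"
  have sum_coords: "sum_list (map x [1..<j + 1]) = (\<Sum>i\<in>{1..j}. x i)" for x :: "nat \<Rightarrow> int" and j
    by (simp only: sum_set_upt_conv_sum_list_nat[symmetric] set_upt
                   atLeastLessThanSuc_atLeastAtMost[symmetric] Suc_eq_plus1)
  have take_coords: "take j (?coords x) = map x [1..<j + 1]" if "j \<le> n" for j x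
    using that by (simp add: take_map del: upt_Suc)
  have vector_coords: "?coords (?vector xs) = xs" if "length xs = n" for xs
    using that by (intro nth_equalityI) (auto simp del: upt_Suc)
  have "bij_betw ?coords (meeting_points n a k t) (meeting_lists t n a k)"
  proof (rule bij_betw_byWitness[where f' = ?vector])
    show "\<forall>x\<in>meeting_points n a k t. ?vector (?coords x) = x"
      by (auto simp: meeting_points_def fun_eq_iff simp del: upt_Suc)
    show "\<forall>xs\<in>meeting_lists t n a k. ?coords (?vector xs) = xs"
      using vector_coords by (simp add: meeting_lists_def bounded_lists_def)
    show "?coords ` meeting_points n a k t \<subseteq> meeting_lists t n a k"
    proof (rule image_subsetI)
      fix x assume "x \<in> meeting_points n a k t"
      moreover have "sum_list (?coords x) = (\<Sum>i\<in>{1..n}. x i)" by (rule sum_coords)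
      moreover have "sum_list (take a (?coords x)) = (\<Sum>i\<in>{1..a}. x i)"
        by (simp only: take_coords[OF assms] sum_coords)
      ultimately show "?coords x \<in> meeting_lists t n a k"
        by (auto simp: meeting_points_def meeting_lists_def bounded_lists_def simp del: upt_Suc)
    qed
    show "?vector ` meeting_lists t n a k \<subseteq> meeting_points n a k t"
    proof
      fix y assume "y \<in> ?vector ` meeting_lists t n a k"
      then obtain xs where xs: "xs \<in> meeting_lists t n a k" and y: "y = ?vector xs" by blast
      then have len: "length xs = n" by (simp add: meeting_lists_def bounded_lists_def)
      have "sum_list (take j xs) = (\<Sum>i\<in>{1..j}. y i)" if "j \<le> n" for j
        using vector_coords[OF len] take_coords[OF that, of y] sum_coords[of y j] y by simp
      from this[of a] this[of n] have "sum_list (take a xs) = (\<Sum>i\<in>{1..a}. y i)"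
        "sum_list xs = (\<Sum>i\<in>{1..n}. y i)" using assms len by simp_all
      then show "y \<in> meeting_points n a k t"
        using xs assms unfolding meeting_points_def meeting_lists_def bounded_lists_def y
        by (auto simp: nth_mem len)
    qed
  qed
  then show ?thesis by (rule bij_betw_same_card)
qed

lemma card_meeting_lists_2:
  "card (meeting_lists t (Suc (Suc m)) 2 k) = (\<Sum>p\<in>{0..t}. \<Sum>q\<in>{0..t}.
      if t \<le> p + q then bounded_compositions t m (int t * int k - int p - int q) else 0)"
proof -
  have "card (meeting_lists t (Suc (Suc m)) 2 k) = (\<Sum>v\<in>{0..int t}. \<Sum>u\<in>{0..int t}.
      card {zs \<in> bounded_lists (int t) m. sum_list (v # u # zs) = int t * int k
                                          \<and> int t \<le> sum_list (take 2 (v # u # zs))})"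
    unfolding meeting_lists_def by (simp only: card_bounded_lists_Suc)
  also have "\<dots> = (\<Sum>v\<in>{0..int t}. \<Sum>u\<in>{0..int t}.
      if int t \<le> v + u then bounded_compositions t m (int t * int k - v - u) else 0)"
    unfolding bounded_compositions_def
    by (intro sum.cong refl) (auto simp: numeral_2_eq_2 intro!: arg_cong[where f = card])
  also have "\<dots> = (\<Sum>p\<in>{0..t}. \<Sum>q\<in>{0..t}.
      if t \<le> p + q then bounded_compositions t m (int t * int k - int p - int q) else 0)"
    by (simp only: sum_atLeastAtMost_int_nat of_nat_add[symmetric] of_nat_le_iff)
  finally show ?thesis .
qed

lemma iseq_1_1:
  assumes "1 \<le> t"
  shows "int (iseq [1, 1, c, d] t) = (\<Sum>p\<in>{0..t}. \<Sum>q\<in>{0..t}.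
      if t \<le> p + q then int (bounded_compositions t (c + d) (int t * int d - int (p + q - t))) else 0)"
proof -
  have "iseq [1, 1, c, d] t = card (meeting_lists t (Suc (Suc (c + d))) 2 (d + 1))"
    using card_meeting_points_eq_lists[of 2 "c + d + 2" "d + 1" t]
    unfolding iseq_def polytope_lattice_count_eq_card schubert_bases_1_1
    by (simp add: dilate_points_meeting_bases[OF assms])
  also have "int \<dots> = (\<Sum>p\<in>{0..t}. \<Sum>q\<in>{0..t}.
      if t \<le> p + q then int (bounded_compositions t (c + d) (int t * int (d + 1) - int p - int q)) else 0)"
    unfolding card_meeting_lists_2 by (simp add: of_nat_sum if_distrib cong: if_cong)
  also have "\<dots> = (\<Sum>p\<in>{0..t}. \<Sum>q\<in>{0..t}.
      if t \<le> p + q then int (bounded_compositions t (c + d) (int t * int d - int (p + q - t))) else 0)"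
    by (intro sum.cong refl) (auto simp: of_nat_diff algebra_simps)
  finally show ?thesis .
qed

lemma iseq_1_1_reflected:
  assumes "1 \<le> t"
  shows "int (iseq [1, 1, c, d] t) = (\<Sum>p\<in>{0..t}. \<Sum>q\<in>{0..t}.
      if t \<le> p + q then int (bounded_compositions t (c + d) (int t * int (c + 1) - int (2 * t - p - q)))
      else 0)"
proof -
  have complement: "bounded_compositions t (c + d) (int t * int d - int (p + q - t))
      = bounded_compositions t (c + d) (int t * int (c + 1) - int (2 * t - p - q))"
    if "p \<le> t" "q \<le> t" "t \<le> p + q" for p q
    by (subst bounded_compositions_complement) (use that in \<open>simp add: of_nat_diff algebra_simps\<close>)
  show ?thesis
    unfolding iseq_1_1[OF assms]
    by (intro sum.cong refl if_cong arg_cong[where f = int] complement) auto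
qed

theorem corollary4p3:
  fixes a b t :: nat
  assumes "a \<ge> 1" and "b \<ge> 2" and "t \<ge> 1"
  shows "int (iseq [1, 1, a, b] t) + int (iseq [1, 1, b - 1, a + 1] t)
           = (int t + 2) * F (a + 1) b 0 t"
proof -
  define f where "f s = int (bounded_compositions t (a + b) (int t * int b - int s))" for s
  have b: "b - 1 + (a + 1) = a + b" "b - 1 + 1 = b" using assms(2) by simp_all
  have "int (iseq [1, 1, a, b] t) + int (iseq [1, 1, b - 1, a + 1] t)
      = (\<Sum>p\<in>{0..t}. \<Sum>q\<in>{0..t}. if t \<le> p + q then f (p + q - t) else 0)
      + (\<Sum>p\<in>{0..t}. \<Sum>q\<in>{0..t}. if t \<le> p + q then f (2 * t - p - q) else 0)"
    unfolding f_def iseq_1_1[OF assms(3), of a b] iseq_1_1_reflected[OF assms(3), of "b - 1" "a + 1"] b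
    ..
  also have "\<dots> = (int t + 2) * (\<Sum>s\<in>{0..t}. f s)"
    by (rule threshold_double_sum)
  also have "(\<Sum>s\<in>{0..t}. f s) = F (a + 1) b 0 t"
    unfolding f_def F_eq_bounded_composition_formula
    by (simp add: bounded_compositions_eq_formula[symmetric] bounded_compositions_Suc of_nat_sum)
  finally show ?thesis .
qed

end
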